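(* Let $\mathfrak{H}=(H,\wedge,\vee,\to,\bot,\top,\Box)$ be a $\mathsf{K4}^{\mathrm{i}}$-algebra. Then $\mathfrak{H}$ is a $\mathsf{GL}^{\mathrm{i}}$-algebra if and only if every $\mathfrak{H}$-polynomial $t(p)$ in one variable $p$ in which $p$ is $\Box$-guarded has a fixed point, i.e. there is $\mathsf{h}\in H$ with $t(\mathsf{h})=\mathsf{h}$.
   Context: A $\mathsf{K4}^{\mathrm{i}}$-algebra is a Heyting algebra $(H,\wedge,\vee,\to,\bot,\top)$ with a unary operation $\Box$ that preserves $\top$ and finite meets (i.e. $\Box\top=\top$ and $\Box(a\wedge b)=\Box a\wedge\Box b$) and satisfies $\Box a\le\Box\Box a$ for all $a$. A $\mathsf{GL}^{\mathrm{i}}$-algebra is a $\mathsf{K4}^{\mathrm{i}}$-algebra additionally satisfying $\Box(\Box a\to a)=\Box a$ for all $a$. An $\mathfrak{H}$-polynomial is a term in the signature $\wedge,\vee,\to,\bot,\top,\Box$ enriched with a constant for each element of $H$; a variable $p$ is $\Box$-guarded in a polynomial if every occurrence of $p$ lies within the scope of some $\Box$. *)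

theory Defs
  imports Main
begin

definition heyting_imp :: "('a::bounded_lattice \<Rightarrow> 'a \<Rightarrow> 'a) \<Rightarrow> bool" where
  "heyting_imp imp \<longleftrightarrow> (\<forall>a b c. c \<le> imp a b \<longleftrightarrow> inf c a \<le> b)"

definition K4i_algebra :: "('a::bounded_lattice \<Rightarrow> 'a \<Rightarrow> 'a) \<Rightarrow> ('a \<Rightarrow> 'a) \<Rightarrow> bool" where
  "K4i_algebra imp box \<longleftrightarrow> heyting_imp imp
     \<and> box top = top
     \<and> (\<forall>a b. box (inf a b) = inf (box a) (box b))
     \<and> (\<forall>a. box a \<le> box (box a))"

definition GLi_algebra :: "('a::bounded_lattice \<Rightarrow> 'a \<Rightarrow> 'a) \<Rightarrow> ('a \<Rightarrow> 'a) \<Rightarrow> bool" where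
  "GLi_algebra imp box \<longleftrightarrow> K4i_algebra imp box \<and> (\<forall>a. box (imp (box a) a) = box a)"

datatype 'a poly1 =
    PVar
  | PConst 'a
  | PBot
  | PTop
  | PMeet "'a poly1" "'a poly1"
  | PJoin "'a poly1" "'a poly1"
  | PImp "'a poly1" "'a poly1"
  | PBox "'a poly1"

fun peval :: "('a::bounded_lattice \<Rightarrow> 'a \<Rightarrow> 'a) \<Rightarrow> ('a \<Rightarrow> 'a) \<Rightarrow> 'a \<Rightarrow> 'a poly1 \<Rightarrow> 'a" where
  "peval imp box h PVar = h"
| "peval imp box h (PConst c) = c"
| "peval imp box h PBot = bot"
| "peval imp box h PTop = top"
| "peval imp box h (PMeet s t) = inf (peval imp box h s) (peval imp box h t)"
| "peval imp box h (PJoin s t) = sup (peval imp box h s) (peval imp box h t)"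
| "peval imp box h (PImp s t) = imp (peval imp box h s) (peval imp box h t)"
| "peval imp box h (PBox s) = box (peval imp box h s)"

fun box_guarded :: "'a poly1 \<Rightarrow> bool" where
  "box_guarded PVar = False"
| "box_guarded (PConst c) = True"
| "box_guarded PBot = True"
| "box_guarded PTop = True"
| "box_guarded (PMeet s t) = (box_guarded s \<and> box_guarded t)"
| "box_guarded (PJoin s t) = (box_guarded s \<and> box_guarded t)"
| "box_guarded (PImp s t) = (box_guarded s \<and> box_guarded t)"
| "box_guarded (PBox s) = True"

end

theory Submission
  imports Defs
begin

text \<open>If \<open>\<box>\<close> satisfies Loeb's identity \<open>\<box>(\<box>a \<rightarrow> a) = \<box>a\<close>, a guarded polynomial
  \<open>t(p) = u(\<box>s(p))\<close> has the fixed point \<open>u(\<box>Y)\<close> with \<open>Y = s(u(\<top>))\<close>: since \<open>\<box>Y\<close> is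
  transitive and below \<open>\<box>Y \<leftrightarrow> \<top>\<close>, it is below \<open>s(u(\<box>Y)) \<leftrightarrow> Y\<close>, and Loeb's identity
  turns this into \<open>\<box>s(u(\<box>Y)) = \<box>Y\<close>. Several boxed subterms are eliminated one at a time,
  as in Bekic's lemma, which needs fixed points depending on parameters; the only property of
  this dependence that is used is that it respects \<open>c \<le> x \<leftrightarrow> y\<close> for every \<open>c \<le> \<box>c\<close>.
  Conversely, a fixed point of \<open>\<box>p \<rightarrow> a\<close> yields Loeb's identity for \<open>a\<close>.\<close>

locale heyting =
  fixes imp :: "'a::bounded_lattice \<Rightarrow> 'a \<Rightarrow> 'a"
  assumes heyting_imp: "heyting_imp imp"
begin

lemma le_imp_iff: "c \<le> imp a b \<longleftrightarrow> inf c a \<le> b"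
  using heyting_imp unfolding heyting_imp_def by blast

lemma imp_inf_le: "inf (imp a b) a \<le> b"
  by (simp flip: le_imp_iff)

lemma inf_sup_le_iff:
  fixes c x y z :: 'a
  shows "inf c (sup x y) \<le> z \<longleftrightarrow> inf c x \<le> z \<and> inf c y \<le> z"
proof -
  have "inf c (sup x y) \<le> z \<longleftrightarrow> sup x y \<le> imp c z"
    by (simp add: le_imp_iff inf_commute)
  also have "\<dots> \<longleftrightarrow> x \<le> imp c z \<and> y \<le> imp c z"
    by (rule le_sup_iff)
  also have "\<dots> \<longleftrightarrow> inf c x \<le> z \<and> inf c y \<le> z"
    by (simp add: le_imp_iff inf_commute)
  finally show ?thesis .
qed

lemma imp_antimono: "x \<le> y \<Longrightarrow> imp y z \<le> imp x z"
proof -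
  assume "x \<le> y"
  then have "inf (imp y z) x \<le> inf (imp y z) y"
    by (simp add: le_infI2)
  then show ?thesis
    unfolding le_imp_iff using imp_inf_le by (rule order_trans)
qed

definition biimp :: "'a \<Rightarrow> 'a \<Rightarrow> 'a" where
  "biimp x y = inf (imp x y) (imp y x)"

lemma le_biimp_iff: "c \<le> biimp x y \<longleftrightarrow> inf c x \<le> y \<and> inf c y \<le> x"
  by (simp add: biimp_def le_imp_iff)

lemma le_biimp_refl: "c \<le> biimp x x"
  by (simp add: le_biimp_iff)

lemma le_biimp_inf:
  assumes "c \<le> biimp x1 x2" and "c \<le> biimp y1 y2"
  shows "c \<le> biimp (inf x1 y1) (inf x2 y2)"
proof -
  have "inf c (inf x1 y1) \<le> inf (inf c x1) (inf c y1)"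
       "inf c (inf x2 y2) \<le> inf (inf c x2) (inf c y2)"
    by (simp_all add: le_infI1 le_infI2)
  with assms show ?thesis
    unfolding le_biimp_iff by (meson inf_mono order_trans)
qed

lemma le_biimp_sup:
  assumes "c \<le> biimp x1 x2" and "c \<le> biimp y1 y2"
  shows "c \<le> biimp (sup x1 y1) (sup x2 y2)"
  using assms unfolding le_biimp_iff inf_sup_le_iff by (meson le_supI1 le_supI2)

lemma le_biimp_imp:
  assumes "c \<le> biimp x1 x2" and "c \<le> biimp y1 y2"
  shows "c \<le> biimp (imp x1 y1) (imp x2 y2)"
proof -
  have transfer: "inf c (imp x y) \<le> imp x' y'"
    if "c \<le> biimp x x'" and "c \<le> biimp y y'" for x x' y y'
  proof -
    have "inf (inf c (imp x y)) x' \<le> inf c (inf (imp x y) (inf c x'))"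
      by (simp add: inf.coboundedI1 inf.coboundedI2 le_infI2)
    also have "\<dots> \<le> inf c (inf (imp x y) x)"
      using that(1) unfolding le_biimp_iff by (meson inf_mono order_refl)
    also have "\<dots> \<le> inf c y"
      using imp_inf_le by (meson inf_mono order_refl)
    also have "\<dots> \<le> y'"
      using that(2) unfolding le_biimp_iff by blast
    finally show ?thesis
      unfolding le_imp_iff .
  qed
  have "c \<le> biimp x2 x1" "c \<le> biimp y2 y1"
    using assms by (auto simp: le_biimp_iff)
  with assms show ?thesis
    using transfer[of x1 x2 y1 y2] transfer[of x2 x1 y2 y1] by (simp add: le_biimp_iff inf_commute)
qed

end

locale K4i =
  fixes imp :: "'a::bounded_lattice \<Rightarrow> 'a \<Rightarrow> 'a" and box :: "'a \<Rightarrow> 'a"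
  assumes K4i_algebra: "K4i_algebra imp box"

sublocale K4i \<subseteq> heyting
  using K4i_algebra by unfold_locales (simp add: K4i_algebra_def)

context K4i
begin

lemma box_inf: "box (inf a b) = inf (box a) (box b)"
  using K4i_algebra unfolding K4i_algebra_def by blast

lemma box_le_box_box: "box a \<le> box (box a)"
  using K4i_algebra unfolding K4i_algebra_def by blast

lemma box_mono: "a \<le> b \<Longrightarrow> box a \<le> box b"
  by (metis box_inf inf.absorb1 inf.cobounded2)

lemma box_inf_box: "box (inf a (box a)) = box a"
  by (simp add: box_inf box_le_box_box inf.absorb1)

lemma box_imp_box_eq_if_fixed_point:
  assumes h: "imp (box h) a = h"
  shows "box (imp (box a) a) = box a"
proof (rule order_antisym)
  have "inf h (box h) \<le> a"
    using le_imp_iff[of h "box h" a] h by simp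
  then have "box (inf h (box h)) \<le> box a"
    by (rule box_mono)
  then have "box h \<le> box a"
    by (simp add: box_inf_box)
  then have "imp (box a) a \<le> h"
    using h imp_antimono by metis
  then have "box (imp (box a) a) \<le> box h"
    by (rule box_mono)
  also note \<open>box h \<le> box a\<close>
  finally show "box (imp (box a) a) \<le> box a" .
  show "box a \<le> box (imp (box a) a)"
    by (rule box_mono) (simp add: le_imp_iff)
qed

lemma le_biimp_box:
  assumes "c \<le> box c" and "c \<le> biimp x y"
  shows "c \<le> biimp (box x) (box y)"
proof -
  have "inf c (box x) \<le> box y" if "inf c x \<le> y" for x y
  proof -
    have "inf c (box x) \<le> box (inf c x)"
      using assms(1) by (simp add: box_inf le_infI1)
    also have "\<dots> \<le> box y"
      using that by (rule box_mono)
    finally show ?thesis .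
  qed
  with assms(2) show ?thesis
    unfolding le_biimp_iff by blast
qed

lemma le_biimp_peval:
  "c \<le> box c \<Longrightarrow> c \<le> biimp x y \<Longrightarrow> c \<le> biimp (peval imp box x t) (peval imp box y t)"
  by (induction t) (auto intro: le_biimp_inf le_biimp_sup le_biimp_imp le_biimp_box le_biimp_refl)

text \<open>An environment \<open>e\<close> lists the parameters of nested fixed points; \<open>case_nat x e\<close> pushes
  a new parameter \<open>x\<close>.\<close>

definition compatible :: "((nat \<Rightarrow> 'a) \<Rightarrow> 'a) \<Rightarrow> bool" where
  "compatible \<phi> \<longleftrightarrow> (\<forall>c e e'. c \<le> box c \<longrightarrow> (\<forall>n. c \<le> biimp (e n) (e' n))
     \<longrightarrow> c \<le> biimp (\<phi> e) (\<phi> e'))"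

lemma compatibleD:
  "compatible \<phi> \<Longrightarrow> c \<le> box c \<Longrightarrow> (\<And>n. c \<le> biimp (e n) (e' n)) \<Longrightarrow> c \<le> biimp (\<phi> e) (\<phi> e')"
  unfolding compatible_def by blast

lemma compatible_const: "compatible (\<lambda>e. a)"
  by (simp add: compatible_def le_biimp_refl)

lemma compatible_proj: "compatible (\<lambda>e. e n)"
  by (simp add: compatible_def)

lemma compatible_subst:
  assumes "compatible \<phi>" and "\<And>n. compatible (\<lambda>e. f e n)"
  shows "compatible (\<lambda>e. \<phi> (f e))"
  using assms unfolding compatible_def by blast

lemma compatible_case_nat:
  assumes "compatible \<phi>" and "compatible g"
  shows "compatible (\<lambda>e. \<phi> (case_nat (g e) e))"
proof (rule compatible_subst[OF assms(1)])
  show "compatible (\<lambda>e. case_nat (g e) e n)" for n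
    by (cases n) (simp_all add: assms(2) compatible_proj)
qed

lemma compatible_peval:
  "compatible \<phi> \<Longrightarrow> compatible (\<lambda>e. peval imp box (\<phi> e) t)"
  unfolding compatible_def by (blast intro: le_biimp_peval)

lemma compatible_binop:
  assumes op: "\<And>c x1 x2 y1 y2. c \<le> biimp x1 x2 \<Longrightarrow> c \<le> biimp y1 y2 \<Longrightarrow> c \<le> biimp (op x1 y1) (op x2 y2)"
    and "compatible f" and "compatible g"
  shows "compatible (\<lambda>e. op (f e) (g e))"
  using assms(2,3) unfolding compatible_def by (blast intro: op)

lemma compatible_fixed_point_const:
  "compatible \<phi> \<Longrightarrow> \<exists>\<psi>. compatible \<psi> \<and> (\<forall>e. \<phi> (case_nat a e) = \<psi> e)"
  using compatible_case_nat[OF _ compatible_const] by blast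

lemma compatible_fixed_point_binop:
  assumes op: "\<And>c x1 x2 y1 y2. c \<le> biimp x1 x2 \<Longrightarrow> c \<le> biimp y1 y2 \<Longrightarrow> c \<le> biimp (op x1 y1) (op x2 y2)"
    and fix_s: "\<And>\<phi>. compatible \<phi> \<Longrightarrow> \<exists>\<psi>. compatible \<psi> \<and> (\<forall>e. \<phi> (case_nat (s (\<psi> e)) e) = \<psi> e)"
    and fix_t: "\<And>\<phi>. compatible \<phi> \<Longrightarrow> \<exists>\<psi>. compatible \<psi> \<and> (\<forall>e. \<phi> (case_nat (t (\<psi> e)) e) = \<psi> e)"
    and "compatible \<phi>"
  shows "\<exists>\<psi>. compatible \<psi> \<and> (\<forall>e. \<phi> (case_nat (op (s (\<psi> e)) (t (\<psi> e))) e) = \<psi> e)"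
proof -
  txt \<open>First solve for \<open>s\<close> with the value of \<open>t\<close> as an extra parameter, then for \<open>t\<close>.\<close>
  let ?\<phi>\<^sub>1 = "\<lambda>e. \<phi> (case_nat (op (e 0) (e 1)) (\<lambda>n. e (Suc (Suc n))))"
  have "compatible ?\<phi>\<^sub>1"
  proof (rule compatible_subst[OF \<open>compatible \<phi>\<close>])
    show "compatible (\<lambda>e. case_nat (op (e 0) (e 1)) (\<lambda>n. e (Suc (Suc n))) n)" for n
      by (cases n) (auto intro: compatible_binop[OF op] compatible_proj)
  qed
  then obtain \<psi>\<^sub>1 where "compatible \<psi>\<^sub>1" and \<psi>\<^sub>1: "\<And>e. ?\<phi>\<^sub>1 (case_nat (s (\<psi>\<^sub>1 e)) e) = \<psi>\<^sub>1 e"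
    using fix_s by blast
  then obtain \<psi>\<^sub>2 where "compatible \<psi>\<^sub>2" and \<psi>\<^sub>2: "\<And>e. \<psi>\<^sub>1 (case_nat (t (\<psi>\<^sub>2 e)) e) = \<psi>\<^sub>2 e"
    using fix_t by blast
  have "\<phi> (case_nat (op (s (\<psi>\<^sub>2 e)) (t (\<psi>\<^sub>2 e))) e) = \<psi>\<^sub>2 e" for e
    using \<psi>\<^sub>1[of "case_nat (t (\<psi>\<^sub>2 e)) e"] by (simp add: \<psi>\<^sub>2)
  with \<open>compatible \<psi>\<^sub>2\<close> show ?thesis
    by blast
qed

end

locale GLi =
  fixes imp :: "'a::bounded_lattice \<Rightarrow> 'a \<Rightarrow> 'a" and box :: "'a \<Rightarrow> 'a"
  assumes GLi_algebra: "GLi_algebra imp box"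

sublocale GLi \<subseteq> K4i
  using GLi_algebra by unfold_locales (simp add: GLi_algebra_def)

context GLi
begin

lemma box_imp_box: "box (imp (box a) a) = box a"
  using GLi_algebra unfolding GLi_algebra_def by blast

lemma box_eq_if_box_le_biimp:
  assumes "box y \<le> biimp x y"
  shows "box x = box y"
proof (rule order_antisym)
  have "x \<le> imp (box y) y"
    using assms by (simp add: le_biimp_iff le_imp_iff inf_commute)
  then have "box x \<le> box (imp (box y) y)"
    by (rule box_mono)
  then show "box x \<le> box y"
    by (simp add: box_imp_box)
  have "inf y (box y) \<le> x"
    using assms by (simp add: le_biimp_iff inf_commute)
  then have "box (inf y (box y)) \<le> box x"
    by (rule box_mono)
  then show "box y \<le> box x"
    by (simp add: box_inf_box)
qed

lemma compatible_fixed_point_box: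
  assumes "compatible \<phi>"
  shows "\<exists>\<psi>. compatible \<psi> \<and> (\<forall>e. \<phi> (case_nat (box (peval imp box (\<psi> e) s)) e) = \<psi> e)"
proof -
  define \<psi> where "\<psi> = (\<lambda>e. \<phi> (case_nat (box (peval imp box (\<phi> (case_nat top e)) s)) e))"
  have "compatible (\<lambda>e. peval imp box (\<phi> (case_nat top e)) (PBox s))"
    by (rule compatible_peval[OF compatible_case_nat[OF assms compatible_const]])
  then have "compatible \<psi>"
    unfolding \<psi>_def peval.simps by (rule compatible_case_nat[OF assms])
  moreover have "\<phi> (case_nat (box (peval imp box (\<psi> e) s)) e) = \<psi> e" for e
  proof -
    define y where "y = peval imp box (\<phi> (case_nat top e)) s"
    have \<psi>_eq: "\<psi> e = \<phi> (case_nat (box y) e)"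
      unfolding \<psi>_def y_def ..
    have "box y \<le> biimp (case_nat (box y) e n) (case_nat top e n)" for n
      by (cases n) (simp_all add: le_biimp_iff le_biimp_refl)
    then have "box y \<le> biimp (\<psi> e) (\<phi> (case_nat top e))"
      unfolding \<psi>_eq by (rule compatibleD[OF assms box_le_box_box])
    then have "box y \<le> biimp (peval imp box (\<psi> e) s) y"
      unfolding y_def by (rule le_biimp_peval[OF box_le_box_box])
    then have box_eq: "box (peval imp box (\<psi> e) s) = box y"
      by (rule box_eq_if_box_le_biimp)
    show ?thesis
      unfolding box_eq by (rule \<psi>_eq[symmetric])
  qed
  ultimately show ?thesis
    by blast
qed

lemma compatible_fixed_point:
  "box_guarded t \<Longrightarrow> compatible \<phi> \<Longrightarrow>
    \<exists>\<psi>. compatible \<psi> \<and> (\<forall>e. \<phi> (case_nat (peval imp box (\<psi> e) t) e) = \<psi> e)"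
proof (induction t arbitrary: \<phi>)
  case PVar
  then show ?case by simp
next
  case (PConst a)
  show ?case
    using PConst.prems(2) unfolding peval.simps by (rule compatible_fixed_point_const)
next
  case PBot
  show ?case
    using PBot.prems(2) unfolding peval.simps by (rule compatible_fixed_point_const)
next
  case PTop
  show ?case
    using PTop.prems(2) unfolding peval.simps by (rule compatible_fixed_point_const)
next
  case (PMeet s t)
  then show ?case
    unfolding peval.simps
    by (intro compatible_fixed_point_binop[where s = "\<lambda>x. peval imp box x s"
          and t = "\<lambda>x. peval imp box x t", OF le_biimp_inf]) simp_all
next
  case (PJoin s t)
  then show ?case
    unfolding peval.simps
    by (intro compatible_fixed_point_binop[where s = "\<lambda>x. peval imp box x s"
          and t = "\<lambda>x. peval imp box x t", OF le_biimp_sup]) simp_all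
next
  case (PImp s t)
  then show ?case
    unfolding peval.simps
    by (intro compatible_fixed_point_binop[where s = "\<lambda>x. peval imp box x s"
          and t = "\<lambda>x. peval imp box x t", OF le_biimp_imp]) simp_all
next
  case (PBox s)
  show ?case
    using PBox.prems(2) unfolding peval.simps by (rule compatible_fixed_point_box)
qed

lemma box_guarded_fixed_point:
  assumes "box_guarded t"
  shows "\<exists>h. peval imp box h t = h"
  using compatible_fixed_point[OF assms compatible_proj[of 0]] by auto

end

theorem theorem3p5:
  fixes imp :: "'a::bounded_lattice \<Rightarrow> 'a \<Rightarrow> 'a" and box :: "'a \<Rightarrow> 'a"
  assumes "K4i_algebra imp box"
  shows "GLi_algebra imp box \<longleftrightarrow>
           (\<forall>t :: 'a poly1. box_guarded t \<longrightarrow> (\<exists>h. peval imp box h t = h))"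
proof
  assume "GLi_algebra imp box"
  then interpret GLi imp box
    by unfold_locales
  show "\<forall>t :: 'a poly1. box_guarded t \<longrightarrow> (\<exists>h. peval imp box h t = h)"
    using box_guarded_fixed_point by blast
next
  assume fixed_points: "\<forall>t :: 'a poly1. box_guarded t \<longrightarrow> (\<exists>h. peval imp box h t = h)"
  interpret K4i imp box
    by unfold_locales (fact assms)
  have "box (imp (box a) a) = box a" for a
  proof -
    obtain h where "peval imp box h (PImp (PBox PVar) (PConst a)) = h"
      using fixed_points[rule_format, of "PImp (PBox PVar) (PConst a)"] by auto
    then show ?thesis
      by (intro box_imp_box_eq_if_fixed_point[of h]) simp
  qed
  with assms show "GLi_algebra imp box"
    by (simp add: GLi_algebra_def)
qed

end
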